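(* Every randomized dynamic posted-price (RDPP) mechanism, with any price update rule, is ex post incentive compatible for myopic bidders and dominant-strategy incentive compatible for myopic miners.
   Context: Dynamic posted-price setting: at each time step a block with $m$ slots is produced by an active miner; $n$ bidders with private values $v_i\ge 0$ submit bids $b_i$, each participating only once. Given the current posted price $q>0$, the eligible set is $M(q)=\{i:b_i\ge q\}$. A block is a set $B\subseteq M(q)$ with $|B|\le m$; each $i\in B$ receives a slot and pays $q$. The next posted price is $T(q,B)$ for a price update rule $T$. In an RDPP mechanism, the intended allocation rule is the random maximal (RM) rule: the miner selects $B$ uniformly at random among the maximal feasible sets, i.e. subsets of $M(q)$ of size $\min\{m,|M(q)|\}$. A myopic bidder's utility is $v_i-q$ if included and $0$ otherwise (in expectation over the allocation randomness); ex post IC for myopic bidders means that, when the miner follows the intended allocation rule, bidding $b_i=v_i$ weakly dominates every other bid for every bidder, for all bids of the others. A myopic miner's utility is the total payment $q|B|$ collected in the current block; DSIC for myopic miners means that following the intended allocation rule is a (weakly) dominant, utility-maximizing strategy for the miner for all bids. *)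

theory Defs
  imports "HOL-Probability.Probability"
begin

text \<open>Bidders are elements of a finite set N (of some type 'a); bids and values are
  functions 'a => real. Prices are reals, m is the number of slots in a block.\<close>

definition eligible :: "'a set \<Rightarrow> real \<Rightarrow> ('a \<Rightarrow> real) \<Rightarrow> 'a set" where
  "eligible N q b = {i \<in> N. b i \<ge> q}"

definition feasible_blocks :: "'a set \<Rightarrow> nat \<Rightarrow> real \<Rightarrow> ('a \<Rightarrow> real) \<Rightarrow> 'a set set" where
  "feasible_blocks N m q b = {B. B \<subseteq> eligible N q b \<and> card B \<le> m}"

definition maximal_blocks :: "'a set \<Rightarrow> nat \<Rightarrow> real \<Rightarrow> ('a \<Rightarrow> real) \<Rightarrow> 'a set set" where
  "maximal_blocks N m q b =
     {B. B \<subseteq> eligible N q b \<and> card B = min m (card (eligible N q b))}"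

definition RM :: "'a set \<Rightarrow> nat \<Rightarrow> real \<Rightarrow> ('a \<Rightarrow> real) \<Rightarrow> 'a set pmf" where
  "RM N m q b = pmf_of_set (maximal_blocks N m q b)"

text \<open>An RDPP mechanism with price update rule T: the outcome at price q is the
  (random) block chosen by the RM rule together with the next posted price T q B.\<close>
definition RDPP :: "(real \<Rightarrow> 'a set \<Rightarrow> real) \<Rightarrow> 'a set \<Rightarrow> nat \<Rightarrow> real \<Rightarrow> ('a \<Rightarrow> real)
    \<Rightarrow> ('a set \<times> real) pmf" where
  "RDPP T N m q b = map_pmf (\<lambda>B. (B, T q B)) (RM N m q b)"

definition bidder_utility :: "real \<Rightarrow> real \<Rightarrow> 'a \<Rightarrow> ('a set \<times> real) pmf \<Rightarrow> real" where
  "bidder_utility q vi i D =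
     measure_pmf.expectation D (\<lambda>(B, q'). if i \<in> B then vi - q else 0)"

definition miner_utility :: "real \<Rightarrow> ('a set \<times> real) pmf \<Rightarrow> real" where
  "miner_utility q D = measure_pmf.expectation D (\<lambda>(B, q'). q * real (card B))"

definition ex_post_IC_myopic_bidders ::
  "(real \<Rightarrow> 'a set \<Rightarrow> real) \<Rightarrow> 'a set \<Rightarrow> nat \<Rightarrow> real \<Rightarrow> bool" where
  "ex_post_IC_myopic_bidders T N m q \<longleftrightarrow>
     (\<forall>v b i bi. i \<in> N \<longrightarrow> (\<forall>j\<in>N. v j \<ge> 0) \<longrightarrow>
        bidder_utility q (v i) i (RDPP T N m q (b(i := bi)))
          \<le> bidder_utility q (v i) i (RDPP T N m q (b(i := v i))))"

text \<open>The deviating miner's block still determines the next price via T.\<close>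
definition DSIC_myopic_miner ::
  "(real \<Rightarrow> 'a set \<Rightarrow> real) \<Rightarrow> 'a set \<Rightarrow> nat \<Rightarrow> real \<Rightarrow> bool" where
  "DSIC_myopic_miner T N m q \<longleftrightarrow>
     (\<forall>b (S :: 'a set pmf). set_pmf S \<subseteq> feasible_blocks N m q b \<longrightarrow>
        miner_utility q (map_pmf (\<lambda>B. (B, T q B)) S) \<le> miner_utility q (RDPP T N m q b))"

end

theory Submission
  imports Defs
begin

text \<open>A bid matters only through whether it clears the posted price q, since the RM rule
  depends on the bids only through the eligible set. For a bidder with value v, the expected
  utility is (v - q) times the probability of inclusion, which vanishes when the bid is below q:
  clearing q can therefore only hurt when v < q, and truthful bidding clears q precisely
  when v \<ge> q. The miner's revenue is q times the block size, and every feasible block has at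
  most min m |M(q)| members, the size of every block drawn by the RM rule.\<close>

lemma finite_eligible: "finite N \<Longrightarrow> finite (eligible N q b)"
  unfolding eligible_def by simp

lemma finite_feasible_blocks: "finite N \<Longrightarrow> finite (feasible_blocks N m q b)"
  unfolding feasible_blocks_def
  by (rule finite_subset[of _ "Pow (eligible N q b)"]) (auto simp: finite_eligible)

lemma maximal_blocks_subset_feasible_blocks: "maximal_blocks N m q b \<subseteq> feasible_blocks N m q b"
  unfolding maximal_blocks_def feasible_blocks_def by auto

lemma maximal_blocks_nonempty: "finite N \<Longrightarrow> maximal_blocks N m q b \<noteq> {}"
  unfolding maximal_blocks_def
  using obtain_subset_with_card_n[of "min m (card (eligible N q b))" "eligible N q b"] by auto

lemma set_pmf_RM: "finite N \<Longrightarrow> set_pmf (RM N m q b) = maximal_blocks N m q b"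
  unfolding RM_def
  using maximal_blocks_nonempty finite_subset[OF maximal_blocks_subset_feasible_blocks]
    finite_feasible_blocks
  by (metis set_pmf_of_set)

lemma RM_cong_eligible: "eligible N q b = eligible N q b' \<Longrightarrow> RM N m q b = RM N m q b'"
  unfolding RM_def maximal_blocks_def by simp

lemma card_le_of_feasible_block:
  assumes "finite N" and "B \<in> feasible_blocks N m q b"
  shows "card B \<le> min m (card (eligible N q b))"
  using assms card_mono[OF finite_eligible[OF assms(1)]] unfolding feasible_blocks_def by auto

lemma bidder_utility_RDPP:
  "bidder_utility q c i (RDPP T N m q b) = (c - q) * measure_pmf.prob (RM N m q b) {B. i \<in> B}"
proof -
  have "(\<lambda>B. if i \<in> B then c - q else 0) = (\<lambda>B. (c - q) * indicator {B. i \<in> B} B)"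
    by (auto simp: indicator_def)
  then show ?thesis
    unfolding bidder_utility_def RDPP_def by simp
qed

lemma prob_RM_ineligible:
  assumes "finite N" and "i \<notin> eligible N q b"
  shows "measure_pmf.prob (RM N m q b) {B. i \<in> B} = 0"
  using assms by (auto simp: measure_pmf_zero_iff set_pmf_RM maximal_blocks_def)

lemma ex_post_IC_myopic_bidders_RDPP:
  assumes "finite N"
  shows "ex_post_IC_myopic_bidders T N m q"
  unfolding ex_post_IC_myopic_bidders_def bidder_utility_RDPP
proof (intro allI impI)
  fix v b i and bi :: real
  define P where "P x = measure_pmf.prob (RM N m q (b(i := x))) {B. i \<in> B}" for x
  have P_nonneg: "P x \<ge> 0" for x
    unfolding P_def by simp
  have P_below_price: "P x = 0" if "x < q" for x
    unfolding P_def using that by (intro prob_RM_ineligible[OF assms]) (simp add: eligible_def)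
  show "(v i - q) * P bi \<le> (v i - q) * P (v i)"
  proof (cases "v i \<ge> q")
    case truthful_eligible: True
    show ?thesis
    proof (cases "bi \<ge> q")
      case True
      then have "eligible N q (b(i := bi)) = eligible N q (b(i := v i))"
        using truthful_eligible by (auto simp: eligible_def)
      then have "RM N m q (b(i := bi)) = RM N m q (b(i := v i))"
        by (rule RM_cong_eligible)
      then show ?thesis
        unfolding P_def by simp
    next
      case False
      then show ?thesis
        using truthful_eligible P_below_price P_nonneg by simp
    qed
  next
    case False
    then show ?thesis
      using P_below_price P_nonneg by (simp add: mult_nonpos_nonneg)
  qed
qed

lemma miner_utility_RDPP:
  assumes "finite N"
  shows "miner_utility q (RDPP T N m q b) = q * min m (card (eligible N q b))"
proof -
  have "miner_utility q (RDPP T N m q b) = measure_pmf.expectation (RM N m q b) (\<lambda>B. q * card B)"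
    unfolding miner_utility_def RDPP_def by simp
  also have "\<dots> = measure_pmf.expectation (RM N m q b) (\<lambda>B. q * min m (card (eligible N q b)))"
    by (intro integral_cong_AE)
      (auto simp: AE_measure_pmf_iff set_pmf_RM[OF assms] maximal_blocks_def)
  finally show ?thesis
    by simp
qed

lemma miner_utility_feasible_le:
  assumes "finite N" and "q \<ge> 0" and feasible: "set_pmf S \<subseteq> feasible_blocks N m q b"
  shows "miner_utility q (map_pmf (\<lambda>B. (B, T q B)) S) \<le> q * min m (card (eligible N q b))"
proof -
  have "miner_utility q (map_pmf (\<lambda>B. (B, T q B)) S) = measure_pmf.expectation S (\<lambda>B. q * card B)"
    unfolding miner_utility_def by simp
  also have "\<dots> \<le> q * min m (card (eligible N q b))"
  proof (rule measure_pmf.integral_le_const)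
    show "integrable (measure_pmf S) (\<lambda>B. q * card B)"
      using finite_subset[OF feasible finite_feasible_blocks[OF assms(1)]]
      by (rule integrable_measure_pmf_finite)
    show "AE B in measure_pmf S. q * card B \<le> q * min m (card (eligible N q b))"
      using feasible card_le_of_feasible_block[OF assms(1)] \<open>q \<ge> 0\<close>
      by (auto simp: AE_measure_pmf_iff intro!: mult_left_mono)
  qed
  finally show ?thesis .
qed

lemma DSIC_myopic_miner_RDPP:
  assumes "finite N" and "q \<ge> 0"
  shows "DSIC_myopic_miner T N m q"
  unfolding DSIC_myopic_miner_def
  using miner_utility_feasible_le[OF assms] miner_utility_RDPP[OF assms(1)] by simp

theorem mainTheorem2:
  fixes T :: "real \<Rightarrow> 'a set \<Rightarrow> real" and N :: "'a set" and m :: nat and q :: real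
  assumes "finite N" and "q > 0"
  shows "ex_post_IC_myopic_bidders T N m q \<and> DSIC_myopic_miner T N m q"
  using ex_post_IC_myopic_bidders_RDPP[OF assms(1)] DSIC_myopic_miner_RDPP[OF assms(1)] assms(2)
  by simp

end
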